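(* Let a binary game be given as described in the context, and suppose Assumptions (A1) and (A2) hold. A vector $(x_i,y_i)_{i\in I}$ with compensation $(\zeta_i)_{i\in I}$, $\zeta_i=\zeta_i^{(1)}+\zeta_i^{(0)}$, is a binary quasi-equilibrium if there exist vectors $\big(\widetilde y_i^{(1)},\widetilde y_i^{(0)},\widetilde\lambda_i^{(1)},\widetilde\lambda_i^{(0)},\kappa_i^{(1)},\kappa_i^{(0)},\zeta_i^{(1)},\zeta_i^{(0)}\big)_{i\in I}$ such that the combined point is a feasible point of problem (P) and, for each $i$, $\zeta_i$ is minimal in the sense of condition (3) of the definition of a binary quasi-equilibrium.
   Context: Binary game: players $i\in I=\{1,\dots,n\}$. Player $i$ chooses $x_i\in\{0,1\}$ and $y_i\in\mathbb{R}^m$ and solves $\min f_i(x_i,y_i,y_{-i})$ subject to $g_i(x_i,y_i)\le 0$, with $g_i:\{0,1\}\times\mathbb{R}^m\to\mathbb{R}^k$, $y_{-i}=(y_j)_{j\ne i}$; $K_i=\{(x_i,y_i):g_i(x_i,y_i)\le0\}$. Binary quasi-equilibrium: a vector $((x_i^*,y_i^* )\in K_i)_{i\in I}$ and compensations $\zeta_i\ge0$ such that for every $i$: (1) $y_i^*$ minimizes $f_i(x_i^*,\cdot,y_{-i}^* )$ over $\{y_i:g_i(x_i^*,y_i)\le0\}$; (2) $f_i(x_i^*,y_i^*,y_{-i}^* )-\zeta_i\le f_i(x_i^\times,y_i^\times,y_{-i}^* )$, where $x_i^\times=1-x_i^*$ and $y_i^\times$ minimizes $f_i(x_i^\times,\cdot,y_{-i}^*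 )$ over $\{y_i:g_i(x_i^\times,y_i)\le0\}$; (3) $\zeta_i$ is the minimal nonnegative number satisfying (2). Assumption (A1): for each $i$ and each fixed $x_i$ (and fixed $y_{-i}$), the KKT conditions of player $i$'s problem with respect to $y_i$ are necessary and sufficient, and $\{y_i:g_i(x_i,y_i)\le0\}$ is compact and non-empty. Assumption (A2): $F$ and $G$ (below) are convex quadratic or linear for every fixed value of the binary variables, and $\partial G/\partial\zeta_i>0$ for all $i$. Problem (P): with a sufficiently large constant $\widetilde K>0$, minimize $F((x_i,y_i)_{i\in I})+G((\zeta_i^{(1)},\zeta_i^{(0)})_{i\in I})$ over $x_i\in\{0,1\}$, $y_i,\widetilde y_i^{(1)},\widetilde y_i^{(0)}\in\mathbb{R}^m$, $\widetilde\lambda_i^{(1)},\widetilde\lambda_i^{(0)}\in\mathbb{R}^k_+$, $\kappa_i^{(1)},\kappa_i^{(0)},\zeta_i^{(1)},\zeta_i^{(0)}\in\mathbb{R}_+$, subject to, for all $i$ and $b\in\{0,1\}$: $\nabla_{y_i} f_i(b,\widetilde y_i^{(b)},y_{-i})+(\widetilde\lambda_i^{(b)})^T\nabla_{y_i} g_i(b,\widetilde y_i^{(b)})=0$; $0\le -g_i(b,\widetilde y_i^{(b)})\perp\widetilde\lambda_i^{(b)}\ge0$; $f_i(1,\widetilde y_i^{(1)},y_{-i})+\kappa_i^{(1)}-\zeta_i^{(1)}-\kappa_i^{(0)}+\zeta_i^{(0)}=f_i(0,\widetilde y_i^{(0)},y_{-i})$; $\kappa_i^{(1)}+\zeta_i^{(1)}\le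 x_i\widetilde K$; $\kappa_i^{(0)}+\zeta_i^{(0)}\le(1-x_i)\widetilde K$; $\widetilde y_i^{(0)}-x_i\widetilde K\le y_i\le\widetilde y_i^{(0)}+x_i\widetilde K$; $\widetilde y_i^{(1)}-(1-x_i)\widetilde K\le y_i\le\widetilde y_i^{(1)}+(1-x_i)\widetilde K$. *)

theory Defs
  imports "HOL-Analysis.Analysis"
begin

text \<open>Players are the elements of a finite type 'p (I = {1..n}).
A strategy profile of continuous variables is y :: real^'m^'p with y$i the
decision y_i of player i. Binary decisions are booleans (True = 1, False = 0).
Player i's objective is f i b y, where b is its binary decision and y the full
profile (y$i its own continuous part, the other components y_{-i}).\<close>

definition repl :: "'a^'p \<Rightarrow> 'p \<Rightarrow> 'a \<Rightarrow> 'a^'p" where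
  "repl y i v = (\<chi> j. if j = i then v else y $ j)"

definition grad :: "(real^'m \<Rightarrow> real) \<Rightarrow> real^'m \<Rightarrow> real^'m" where
  "grad h v = (\<chi> j. frechet_derivative h (at v) (axis j 1))"

definition feas :: "('p \<Rightarrow> bool \<Rightarrow> real^'m \<Rightarrow> real^'k) \<Rightarrow> 'p \<Rightarrow> bool \<Rightarrow> real^'m \<Rightarrow> bool" where
  "feas g i b v \<longleftrightarrow> (\<forall>l. g i b v $ l \<le> 0)"

definition best_response ::
  "('p \<Rightarrow> bool \<Rightarrow> real^'m^'p \<Rightarrow> real) \<Rightarrow> ('p \<Rightarrow> bool \<Rightarrow> real^'m \<Rightarrow> real^'k)
    \<Rightarrow> 'p \<Rightarrow> bool \<Rightarrow> real^'m^'p \<Rightarrow> real^'m \<Rightarrow> bool" where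
  "best_response f g i b y v \<longleftrightarrow> feas g i b v \<and>
     (\<forall>w. feas g i b w \<longrightarrow> f i b (repl y i v) \<le> f i b (repl y i w))"

definition kkt ::
  "('p \<Rightarrow> bool \<Rightarrow> real^'m^'p \<Rightarrow> real) \<Rightarrow> ('p \<Rightarrow> bool \<Rightarrow> real^'m \<Rightarrow> real^'k)
    \<Rightarrow> 'p \<Rightarrow> bool \<Rightarrow> real^'m^'p \<Rightarrow> real^'m \<Rightarrow> real^'k \<Rightarrow> bool" where
  "kkt f g i b y v lam \<longleftrightarrow>
     grad (\<lambda>w. f i b (repl y i w)) v + (\<Sum>l\<in>UNIV. lam $ l *\<^sub>R grad (\<lambda>w. g i b w $ l) v) = 0 \<and>
     (\<forall>l. 0 \<le> - g i b v $ l \<and> 0 \<le> lam $ l \<and> (- g i b v $ l) * lam $ l = 0)"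

text \<open>Assumption (A1) (differentiability in y_i is implicit in the use of KKT conditions).\<close>
definition A1 ::
  "('p \<Rightarrow> bool \<Rightarrow> real^'m^'p \<Rightarrow> real) \<Rightarrow> ('p \<Rightarrow> bool \<Rightarrow> real^'m \<Rightarrow> real^'k) \<Rightarrow> bool" where
  "A1 f g \<longleftrightarrow> (\<forall>i b y.
     compact {v. feas g i b v} \<and> {v. feas g i b v} \<noteq> {} \<and>
     (\<forall>v. (\<lambda>w. f i b (repl y i w)) differentiable (at v)) \<and>
     (\<forall>v l. (\<lambda>w. g i b w $ l) differentiable (at v)) \<and>
     (\<forall>v. best_response f g i b y v \<longleftrightarrow> (\<exists>lam. kkt f g i b y v lam)))"

definition cvx_quad_or_lin :: "('a::real_vector \<Rightarrow> real) \<Rightarrow> bool" where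
  "cvx_quad_or_lin q \<longleftrightarrow> (\<exists>B L c. bilinear B \<and> (\<forall>z. 0 \<le> B z z) \<and> linear L \<and>
       (\<forall>z. q z = B z z + L z + c))"

definition A2 :: "(('p \<Rightarrow> bool) \<Rightarrow> real^'m^'p \<Rightarrow> real) \<Rightarrow> ((real^'p) \<times> (real^'p) \<Rightarrow> real) \<Rightarrow> bool" where
  "A2 F G \<longleftrightarrow> (\<forall>x. cvx_quad_or_lin (F x)) \<and> cvx_quad_or_lin G \<and>
     (\<forall>z. G differentiable (at z)) \<and>
     (\<forall>z i. frechet_derivative G (at z) (axis i 1, 0) > 0 \<and>
            frechet_derivative G (at z) (0, axis i 1) > 0)"

definition feasible_P ::
  "('p \<Rightarrow> bool \<Rightarrow> real^'m^'p \<Rightarrow> real) \<Rightarrow> ('p \<Rightarrow> bool \<Rightarrow> real^'m \<Rightarrow> real^'k) \<Rightarrow> real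
   \<Rightarrow> ('p \<Rightarrow> bool) \<Rightarrow> real^'m^'p \<Rightarrow> real^'m^'p \<Rightarrow> real^'m^'p
   \<Rightarrow> real^'k^'p \<Rightarrow> real^'k^'p \<Rightarrow> real^'p \<Rightarrow> real^'p \<Rightarrow> real^'p \<Rightarrow> real^'p \<Rightarrow> bool" where
  "feasible_P f g K x y yt1 yt0 lam1 lam0 kap1 kap0 zeta1 zeta0 \<longleftrightarrow> (\<forall>i.
     kkt f g i True y (yt1 $ i) (lam1 $ i) \<and>
     kkt f g i False y (yt0 $ i) (lam0 $ i) \<and>
     0 \<le> kap1 $ i \<and> 0 \<le> kap0 $ i \<and> 0 \<le> zeta1 $ i \<and> 0 \<le> zeta0 $ i \<and>
     f i True (repl y i (yt1 $ i)) + kap1 $ i - zeta1 $ i - kap0 $ i + zeta0 $ i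
        = f i False (repl y i (yt0 $ i)) \<and>
     kap1 $ i + zeta1 $ i \<le> of_bool (x i) * K \<and>
     kap0 $ i + zeta0 $ i \<le> (1 - of_bool (x i)) * K \<and>
     (\<forall>j. yt0 $ i $ j - of_bool (x i) * K \<le> y $ i $ j \<and> y $ i $ j \<le> yt0 $ i $ j + of_bool (x i) * K) \<and>
     (\<forall>j. yt1 $ i $ j - (1 - of_bool (x i)) * K \<le> y $ i $ j \<and>
          y $ i $ j \<le> yt1 $ i $ j + (1 - of_bool (x i)) * K))"

definition minimal_comp ::
  "('p \<Rightarrow> bool \<Rightarrow> real^'m^'p \<Rightarrow> real) \<Rightarrow> ('p \<Rightarrow> bool \<Rightarrow> real^'m \<Rightarrow> real^'k)
    \<Rightarrow> ('p \<Rightarrow> bool) \<Rightarrow> real^'m^'p \<Rightarrow> 'p \<Rightarrow> real \<Rightarrow> bool" where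
  "minimal_comp f g x y i z \<longleftrightarrow> (\<exists>yc. best_response f g i (\<not> x i) y yc \<and>
     0 \<le> z \<and> f i (x i) y - z \<le> f i (\<not> x i) (repl y i yc) \<and>
     (\<forall>t. 0 \<le> t \<and> f i (x i) y - t \<le> f i (\<not> x i) (repl y i yc) \<longrightarrow> z \<le> t))"

definition binary_quasi_eq ::
  "('p \<Rightarrow> bool \<Rightarrow> real^'m^'p \<Rightarrow> real) \<Rightarrow> ('p \<Rightarrow> bool \<Rightarrow> real^'m \<Rightarrow> real^'k)
    \<Rightarrow> ('p \<Rightarrow> bool) \<Rightarrow> real^'m^'p \<Rightarrow> real^'p \<Rightarrow> bool" where
  "binary_quasi_eq f g x y zeta \<longleftrightarrow> (\<forall>i.
     feas g i (x i) (y $ i) \<and>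
     best_response f g i (x i) y (y $ i) \<and>
     minimal_comp f g x y i (zeta $ i))"

end

theory Submission
  imports Defs
begin

text \<open>With the binary decision of player i fixed, the big-M constraints of (P) pin y_i to the
KKT point of the chosen branch, and under (A1) a KKT point is a best response. Minimality of
the compensation is assumed, so nothing else is needed.\<close>

lemma big_M_zero_slack_eq:
  fixes u v :: "real^'n"
  assumes "\<forall>j. u $ j - s * K \<le> v $ j \<and> v $ j \<le> u $ j + s * K" and "s = 0"
  shows "v = u"
  using assms by (simp add: vec_eq_iff order_antisym)

lemma feasible_P_selected_kkt:
  assumes "feasible_P f g K x y yt1 yt0 lam1 lam0 kap1 kap0 zeta1 zeta0"
  shows "kkt f g i (x i) y (y $ i) (if x i then lam1 $ i else lam0 $ i)"
proof -
  have bounds: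
    "\<forall>j. yt1 $ i $ j - (1 - of_bool (x i)) * K \<le> y $ i $ j \<and>
         y $ i $ j \<le> yt1 $ i $ j + (1 - of_bool (x i)) * K"
    "\<forall>j. yt0 $ i $ j - of_bool (x i) * K \<le> y $ i $ j \<and> y $ i $ j \<le> yt0 $ i $ j + of_bool (x i) * K"
    and kkts: "kkt f g i True y (yt1 $ i) (lam1 $ i)" "kkt f g i False y (yt0 $ i) (lam0 $ i)"
    using assms unfolding feasible_P_def by blast+
  show ?thesis
  proof (cases "x i")
    case True
    then have "y $ i = yt1 $ i" using big_M_zero_slack_eq[OF bounds(1)] by simp
    with True kkts(1) show ?thesis by simp
  next
    case False
    then have "y $ i = yt0 $ i" using big_M_zero_slack_eq[OF bounds(2)] by simp
    with False kkts(2) show ?thesis by simp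
  qed
qed

lemma A1_kkt_imp_best_response:
  assumes "A1 f g" and "kkt f g i b y v lam"
  shows "best_response f g i b y v"
  using assms unfolding A1_def by blast

theorem corollary1:
  fixes f :: "'p::finite \<Rightarrow> bool \<Rightarrow> real^'m^'p \<Rightarrow> real"
    and g :: "'p \<Rightarrow> bool \<Rightarrow> real^'m \<Rightarrow> real^'k"
    and F :: "('p \<Rightarrow> bool) \<Rightarrow> real^'m^'p \<Rightarrow> real"
    and G :: "(real^'p) \<times> (real^'p) \<Rightarrow> real"
    and K :: real
    and x :: "'p \<Rightarrow> bool"
    and y yt1 yt0 :: "real^'m^'p"
    and lam1 lam0 :: "real^'k^'p"
    and kap1 kap0 zeta1 zeta0 :: "real^'p"
  assumes "A1 f g"
    and "A2 F G"
    and "K > 0"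
    and "feasible_P f g K x y yt1 yt0 lam1 lam0 kap1 kap0 zeta1 zeta0"
    and "\<forall>i. minimal_comp f g x y i (zeta1 $ i + zeta0 $ i)"
  shows "binary_quasi_eq f g x y (\<chi> i. zeta1 $ i + zeta0 $ i)"
  unfolding binary_quasi_eq_def
proof (intro allI conjI)
  fix i
  show best: "best_response f g i (x i) y (y $ i)"
    using A1_kkt_imp_best_response[OF assms(1) feasible_P_selected_kkt[OF assms(4)]] .
  then show "feas g i (x i) (y $ i)"
    unfolding best_response_def by blast
  show "minimal_comp f g x y i ((\<chi> i. zeta1 $ i + zeta0 $ i) $ i)"
    using assms(5) by simp
qed

end
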